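(* Let $(\mathcal{H},d)$ be a Hadamard space, $X_1,\dots,X_n\in\mathcal{H}$, $C_n=\mathrm{conv}\{X_1,\dots,X_n\}$, and $y\in\mathbb{R}^n$. Then the domain of $\bar h_y$, $\{x\in\mathcal{H}:\bar h_y(x)>-\infty\}$, equals $\mathrm{cl}(C_n)$.
   Context: A Hadamard space is a complete CAT(0) geodesic metric space, with unique geodesics; $\mathcal{H}\times\mathbb{R}$ is again a Hadamard space. A set is convex if it contains the geodesic between any two of its points; $\mathrm{conv}$ denotes convex hull and $\mathrm{cl}$ closure. A function $g:\mathcal{H}\to[-\infty,\infty]$ is concave if its hypograph $\mathrm{hypo}\,g=\{(x,\mu):\mu\le g(x)\}$ is convex in $\mathcal{H}\times\mathbb{R}$. For $y=(y_1,\dots,y_n)\in\mathbb{R}^n$, define $f_y(x)=y_i$ if $x=X_i$ and $f_y(x)=-\infty$ otherwise. The upper-semicontinuous concave hull $\bar h_y$ of $f_y$ is the least upper-semicontinuous concave function $g$ with $g\ge f_y$ (i.e. $g(X_i)\ge y_i$ for all $i$); equivalently, $\mathrm{hypo}\,\bar h_y=\mathrm{cl}(\mathrm{conv}(\mathrm{hypo}\,f_y))$. *)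

theory Defs
  imports "HOL-Analysis.Analysis"
begin

definition geodesic :: "('a::metric_space \<Rightarrow> 'a \<Rightarrow> (real \<Rightarrow> 'a) \<Rightarrow> bool)" where
  "geodesic x y \<gamma> \<longleftrightarrow> \<gamma> 0 = x \<and> \<gamma> 1 = y \<and>
     (\<forall>s\<in>{0..1}. \<forall>t\<in>{0..1}. dist (\<gamma> s) (\<gamma> t) = \<bar>s - t\<bar> * dist x y)"

definition hadamard_space :: "'a::metric_space itself \<Rightarrow> bool" where
  "hadamard_space TYPE('a) \<longleftrightarrow>
     complete (UNIV :: 'a set) \<and>
     (\<forall>x y :: 'a. \<exists>\<gamma>. geodesic x y \<gamma>) \<and>
     (\<forall>x y :: 'a. \<forall>\<gamma>1 \<gamma>2. geodesic x y \<gamma>1 \<longrightarrow> geodesic x y \<gamma>2 \<longrightarrow> (\<forall>t\<in>{0..1}. \<gamma>1 t = \<gamma>2 t)) \<and>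
     (\<forall>x y z :: 'a. \<forall>\<gamma>. geodesic x y \<gamma> \<longrightarrow> (\<forall>t\<in>{0..1}.
        (dist z (\<gamma> t))\<^sup>2 \<le> (1 - t) * (dist z x)\<^sup>2 + t * (dist z y)\<^sup>2 - t * (1 - t) * (dist x y)\<^sup>2))"

definition gconvex :: "'a::metric_space set \<Rightarrow> bool" where
  "gconvex S \<longleftrightarrow> (\<forall>x\<in>S. \<forall>y\<in>S. \<forall>\<gamma>. geodesic x y \<gamma> \<longrightarrow> (\<forall>t\<in>{0..1}. \<gamma> t \<in> S))"

text \<open>Hypograph in H \<times> R (product metric sqrt(d^2 + |.|^2)).\<close>
definition hypo :: "('a \<Rightarrow> ereal) \<Rightarrow> ('a \<times> real) set" where
  "hypo g = {(x, \<mu>). ereal \<mu> \<le> g x}"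

definition gconcave :: "('a::metric_space \<Rightarrow> ereal) \<Rightarrow> bool" where
  "gconcave g \<longleftrightarrow> gconvex (hypo g)"

definition usc :: "('a::topological_space \<Rightarrow> ereal) \<Rightarrow> bool" where
  "usc g \<longleftrightarrow> (\<forall>x c. g x < c \<longrightarrow> eventually (\<lambda>z. g z < c) (at x))"

definition fy :: "nat \<Rightarrow> (nat \<Rightarrow> 'a) \<Rightarrow> (nat \<Rightarrow> real) \<Rightarrow> 'a \<Rightarrow> ereal" where
  "fy n X y x = (if \<exists>i<n. X i = x then ereal (Max {y i | i. i < n \<and> X i = x}) else -\<infinity>)"

definition usc_concave_hull :: "nat \<Rightarrow> (nat \<Rightarrow> 'a::metric_space) \<Rightarrow> (nat \<Rightarrow> real) \<Rightarrow> 'a \<Rightarrow> ereal" where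
  "usc_concave_hull n X y x =
     (INF g \<in> {g. usc g \<and> gconcave g \<and> (\<forall>z. g z \<ge> fy n X y z)}. g x)"

end

theory Submission
  imports Defs
begin

(* If x lies outside K = cl(conv{X_1, ..., X_n}), the function that is +infinity on K and
   -infinity elsewhere is an upper semicontinuous concave majorant of f_y, so the hull is
   -infinity at x.  Its hypograph K x R is convex because closures of convex sets are convex
   in a Hadamard space (by the CN inequality, moving an endpoint of a geodesic by delta moves
   its points by O(sqrt delta)) and because geodesics of H x R project onto geodesics of H.
   Conversely, for every such majorant g and every c <= min y, the superlevel set {g >= c}
   is closed by upper semicontinuity, convex since horizontal geodesics at height c stay in
   the hypograph, and contains every X_i; hence it contains K, and the hull is >= c on K. *)

lemma geodesic_dist:
  assumes "geodesic x y \<gamma>" "t \<in> {0..1}"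
  shows "dist x (\<gamma> t) = t * dist x y" "dist (\<gamma> t) y = (1 - t) * dist x y"
proof -
  have g: "\<gamma> 0 = x" "\<gamma> 1 = y"
    "\<And>s t. s \<in> {0..1} \<Longrightarrow> t \<in> {0..1} \<Longrightarrow> dist (\<gamma> s) (\<gamma> t) = \<bar>s - t\<bar> * dist x y"
    using assms(1) unfolding geodesic_def by auto
  show "dist x (\<gamma> t) = t * dist x y" using g(3)[of 0 t] g(1) assms(2) by auto
  show "dist (\<gamma> t) y = (1 - t) * dist x y" using g(3)[of t 1] g(2) assms(2) by auto
qed

lemma geodesic_reverse: "geodesic x y \<gamma> \<Longrightarrow> geodesic y x (\<lambda>s. \<gamma> (1 - s))"
  unfolding geodesic_def
proof (intro conjI ballI)
  fix s t :: real
  assume g: "\<gamma> 0 = x \<and> \<gamma> 1 = y \<and> (\<forall>s\<in>{0..1}. \<forall>t\<in>{0..1}. dist (\<gamma> s) (\<gamma> t) = \<bar>s - t\<bar> * dist x y)"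
    and st: "s \<in> {0..1}" "t \<in> {0..1}"
  have "dist (\<gamma> (1 - s)) (\<gamma> (1 - t)) = \<bar>(1 - s) - (1 - t)\<bar> * dist x y" using g st by auto
  thus "dist (\<gamma> (1 - s)) (\<gamma> (1 - t)) = \<bar>s - t\<bar> * dist y x"
    by (simp add: dist_commute abs_minus_commute)
qed auto

lemma geodesic_Pair_const:
  "geodesic x y \<sigma> \<Longrightarrow> geodesic (x, c) (y, c) (\<lambda>s. (\<sigma> s, c))"
  unfolding geodesic_def dist_Pair_Pair by simp

lemma geodesic_Pair_fst_dist:
  fixes \<gamma> :: "real \<Rightarrow> 'a::metric_space \<times> real"
  assumes g: "geodesic (a, \<mu>) (b, \<nu>) \<gamma>" and t: "t \<in> {0..1}"
  shows "dist a (fst (\<gamma> t)) = t * dist a b" "dist (fst (\<gamma> t)) b = (1 - t) * dist a b"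
proof -
  obtain z s where zs: "\<gamma> t = (z, s)" by (cases "\<gamma> t")
  \<comment> \<open>Equality in the triangle inequality of the Euclidean plane for \<open>p\<close> and \<open>q\<close> forces
     them to be parallel and \<open>d(a,b) = d(a,z) + d(z,b)\<close>.\<close>
  define p :: "real \<times> real" where "p = (dist a z, s - \<mu>)"
  define q :: "real \<times> real" where "q = (dist z b, \<nu> - s)"
  define L where "L = dist (a, \<mu>) (b, \<nu>)"
  have norm_dist: "norm (dist u v, \<beta> - \<alpha>) = dist (u, \<alpha>) (v, \<beta>)" for u v :: 'a and \<alpha> \<beta> :: real
    by (simp add: norm_Pair dist_Pair_Pair dist_real_def abs_minus_commute)
  have np: "norm p = t * L" and nq: "norm q = (1 - t) * L"
    using geodesic_dist[OF g t] zs unfolding p_def q_def L_def norm_dist by simp_all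
  have "L \<le> norm (p + q)"
    unfolding L_def norm_dist[symmetric] p_def q_def
    by (simp add: norm_Pair power_mono dist_triangle)
  moreover have "norm (p + q) \<le> L" using norm_triangle_ineq[of p q] np nq by (simp add: algebra_simps)
  ultimately have sum: "norm (p + q) = L" by simp
  hence "norm p *\<^sub>R q = norm q *\<^sub>R p"
    using np nq norm_triangle_eq[of p q] by (simp add: algebra_simps)
  hence "fst ((t * L) *\<^sub>R q) = fst (((1 - t) * L) *\<^sub>R p)" by (simp only: np nq)
  hence par: "t * L * dist z b = (1 - t) * L * dist a z" by (simp add: p_def q_def)
  have "dist a b = dist a z + dist z b"
  proof -
    have "sqrt ((dist a z + dist z b)\<^sup>2 + (\<nu> - \<mu>)\<^sup>2) = sqrt ((dist a b)\<^sup>2 + (\<nu> - \<mu>)\<^sup>2)"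
      using sum unfolding L_def norm_dist[symmetric] p_def q_def by (simp add: norm_Pair)
    thus ?thesis by simp
  qed
  moreover have "t * dist z b = (1 - t) * dist a z"
  proof (cases "L = 0")
    case True
    thus ?thesis using np nq unfolding p_def q_def by (simp add: norm_Pair)
  qed (use par in simp)
  ultimately show "dist a (fst (\<gamma> t)) = t * dist a b" "dist (fst (\<gamma> t)) b = (1 - t) * dist a b"
    using zs by (simp_all add: algebra_simps)
qed

lemma gconvexI:
  "(\<And>x y \<gamma> t. x \<in> S \<Longrightarrow> y \<in> S \<Longrightarrow> geodesic x y \<gamma> \<Longrightarrow> t \<in> {0..1} \<Longrightarrow> \<gamma> t \<in> S)
    \<Longrightarrow> gconvex S"
  unfolding gconvex_def by blast

lemma gconvexD:
  "gconvex S \<Longrightarrow> x \<in> S \<Longrightarrow> y \<in> S \<Longrightarrow> geodesic x y \<gamma> \<Longrightarrow> t \<in> {0..1} \<Longrightarrow> \<gamma> t \<in> S"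
  unfolding gconvex_def by blast

lemma gconvex_gconvex_hull: "gconvex (gconvex hull S)"
  unfolding hull_def gconvex_def by blast

lemma power2_dist_ge_diff: "(dist a b)\<^sup>2 - 2 * dist a b * dist b c \<le> (dist a c)\<^sup>2"
proof (cases "dist b c \<le> dist a b")
  case True
  have "dist a b - dist b c \<le> dist a c" using dist_triangle[of a b c] dist_commute[of c b] by linarith
  hence "(dist a b - dist b c)\<^sup>2 \<le> (dist a c)\<^sup>2" using True by (simp add: power_mono)
  thus ?thesis unfolding power2_diff using zero_le_power2[of "dist b c"] by linarith
next
  case False
  hence "dist a b \<le> 2 * dist b c" using zero_le_dist[of b c] by linarith
  hence "dist a b * dist a b \<le> dist a b * (2 * dist b c)" by (rule mult_left_mono) simp
  hence "(dist a b)\<^sup>2 - 2 * dist a b * dist b c \<le> 0" by (simp add: power2_eq_square algebra_simps)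
  thus ?thesis using zero_le_power2[of "dist a c"] by linarith
qed

lemma hadamard_space_geodesic_exists:
  assumes "hadamard_space TYPE('a::metric_space)"
  obtains \<gamma> where "geodesic (x::'a) y \<gamma>"
  using assms unfolding hadamard_space_def by blast

lemma hadamard_space_CN_inequality:
  assumes "hadamard_space TYPE('a::metric_space)" "geodesic (x::'a) y \<gamma>" "t \<in> {0..1}"
  shows "(dist z (\<gamma> t))\<^sup>2 \<le> (1 - t) * (dist z x)\<^sup>2 + t * (dist z y)\<^sup>2 - t * (1 - t) * (dist x y)\<^sup>2"
  using assms unfolding hadamard_space_def by blast

lemma hadamard_space_geodesic_point_eq:
  assumes H: "hadamard_space TYPE('a::metric_space)" and g: "geodesic (a::'a) b \<sigma>" and t: "t \<in> {0..1}"
    and za: "dist a z = t * dist a b" and zb: "dist z b = (1 - t) * dist a b"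
  shows "z = \<sigma> t"
proof -
  have "(dist z (\<sigma> t))\<^sup>2 \<le> (1 - t) * (dist z a)\<^sup>2 + t * (dist z b)\<^sup>2 - t * (1 - t) * (dist a b)\<^sup>2"
    using hadamard_space_CN_inequality[OF H g t] .
  also have "\<dots> = 0"
    unfolding dist_commute[of z a] za zb by (simp only: power2_eq_square; algebra)
  finally show ?thesis by simp
qed

lemma hadamard_space_geodesic_Pair_fst:
  fixes \<gamma> :: "real \<Rightarrow> 'a::metric_space \<times> real"
  assumes "hadamard_space TYPE('a)" "geodesic (a, \<mu>) (b, \<nu>) \<gamma>" "geodesic a b \<sigma>" "t \<in> {0..1}"
  shows "fst (\<gamma> t) = \<sigma> t"
  by (rule hadamard_space_geodesic_point_eq[OF assms(1,3,4) geodesic_Pair_fst_dist[OF assms(2,4)]])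

lemma hadamard_space_geodesic_move_endpoint:
  assumes H: "hadamard_space TYPE('a::metric_space)" and g: "geodesic (a::'a) b \<sigma>"
    and g': "geodesic a b' \<sigma>'" and t: "t \<in> {0..1}"
  shows "(dist (\<sigma> t) (\<sigma>' t))\<^sup>2 \<le> dist b b' * (4 * dist a b + dist b b')"
proof -
  define D \<delta> where "D = dist a b" and "\<delta> = dist b b'"
  have t01: "0 \<le> t" "t \<le> 1" using t by auto
  have "D\<^sup>2 - 2 * D * \<delta> \<le> (dist a b')\<^sup>2" unfolding D_def \<delta>_def by (rule power2_dist_ge_diff)
  hence far: "t * (1 - t) * (D\<^sup>2 - 2 * D * \<delta>) \<le> t * (1 - t) * (dist a b')\<^sup>2"
    using t01 by (simp add: mult_left_mono)
  have "dist (\<sigma> t) b' \<le> (1 - t) * D + \<delta>"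
    using geodesic_dist(2)[OF g t] dist_triangle[of "\<sigma> t" b' b] unfolding D_def \<delta>_def
    by (simp add: dist_commute)
  hence "(dist (\<sigma> t) b')\<^sup>2 \<le> ((1 - t) * D + \<delta>)\<^sup>2" by (simp add: power_mono)
  hence near: "t * (dist (\<sigma> t) b')\<^sup>2 \<le> t * ((1 - t) * D + \<delta>)\<^sup>2" using t01 by (simp add: mult_left_mono)
  have "(dist (\<sigma> t) (\<sigma>' t))\<^sup>2
      \<le> (1 - t) * (dist (\<sigma> t) a)\<^sup>2 + t * (dist (\<sigma> t) b')\<^sup>2 - t * (1 - t) * (dist a b')\<^sup>2"
    using hadamard_space_CN_inequality[OF H g' t] .
  also have "\<dots> \<le> (1 - t) * (t * D)\<^sup>2 + t * ((1 - t) * D + \<delta>)\<^sup>2 - t * (1 - t) * (D\<^sup>2 - 2 * D * \<delta>)"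
    using geodesic_dist(1)[OF g t] near far unfolding D_def by (simp add: dist_commute)
  also have "\<dots> = 4 * (t * (1 - t)) * (D * \<delta>) + t * \<delta>\<^sup>2"
    by (simp add: power2_eq_square algebra_simps)
  also have "\<dots> \<le> 4 * (D * \<delta>) + \<delta>\<^sup>2"
  proof -
    have "t * (1 - t) \<le> 1" using t01 by (simp add: mult_le_one)
    hence "t * (1 - t) * (D * \<delta>) \<le> 1 * (D * \<delta>)"
      by (rule mult_right_mono) (simp add: D_def \<delta>_def)
    moreover have "t * \<delta>\<^sup>2 \<le> 1 * \<delta>\<^sup>2" using t01 by (intro mult_right_mono) auto
    ultimately show ?thesis by linarith
  qed
  finally show ?thesis unfolding D_def \<delta>_def by (simp add: algebra_simps power2_eq_square)
qed

lemma hadamard_space_geodesic_point_in_closure: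
  assumes H: "hadamard_space TYPE('a::metric_space)" and g: "geodesic (a::'a) b \<sigma>" and t: "t \<in> {0..1}"
    and approx: "\<And>e. e > 0 \<Longrightarrow> \<exists>b' \<sigma>'. dist b' b < e \<and> geodesic a b' \<sigma>' \<and> \<sigma>' t \<in> C"
  shows "\<sigma> t \<in> closure C"
  unfolding closure_approachable
proof (intro allI impI)
  fix e :: real
  assume e: "e > 0"
  define \<delta> where "\<delta> = min 1 (e\<^sup>2 / (4 * dist a b + 1))"
  have pos: "0 < 4 * dist a b + 1" by (simp add: add_nonneg_pos)
  have "\<delta> > 0" using e pos by (simp add: \<delta>_def)
  then obtain b' \<sigma>' where b': "dist b' b < \<delta>" "geodesic a b' \<sigma>'" "\<sigma>' t \<in> C"
    using approx by blast
  have "(dist (\<sigma>' t) (\<sigma> t))\<^sup>2 \<le> dist b b' * (4 * dist a b + dist b b')"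
    using hadamard_space_geodesic_move_endpoint[OF H g b'(2) t] by (simp add: dist_commute)
  also have "\<dots> \<le> dist b b' * (4 * dist a b + 1)"
    using b'(1) by (intro mult_left_mono) (auto simp: \<delta>_def dist_commute)
  also have "\<dots> < \<delta> * (4 * dist a b + 1)"
    using b'(1) pos by (intro mult_strict_right_mono) (auto simp: dist_commute)
  also have "\<dots> \<le> e\<^sup>2"
  proof -
    have "\<delta> \<le> e\<^sup>2 / (4 * dist a b + 1)" by (simp add: \<delta>_def)
    thus ?thesis by (simp only: pos_le_divide_eq[OF pos])
  qed
  finally have "dist (\<sigma>' t) (\<sigma> t) < e"
    by (rule power2_less_imp_less) (use e in simp)
  thus "\<exists>x\<in>C. dist x (\<sigma> t) < e" using b'(3) by blast
qed

lemma gconvex_closure: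
  assumes H: "hadamard_space TYPE('a::metric_space)" and S: "gconvex (S::'a set)"
  shows "gconvex (closure S)"
proof -
  \<comment> \<open>Move the endpoints into \<open>S\<close> one at a time, using the reversed geodesic for \<open>a\<close>.\<close>
  have one_side: "\<sigma> t \<in> closure S"
    if a: "a \<in> S" and b: "b \<in> closure S" and g: "geodesic a b \<sigma>" and t: "t \<in> {0..1}" for a b \<sigma> t
  proof (rule hadamard_space_geodesic_point_in_closure[OF H g t])
    fix e :: real
    assume "e > 0"
    then obtain b' where b': "b' \<in> S" "dist b' b < e" using b closure_approachable by blast
    obtain \<sigma>' where \<sigma>': "geodesic a b' \<sigma>'" using hadamard_space_geodesic_exists[OF H] .
    have "\<sigma>' t \<in> S" by (rule gconvexD[OF S a b'(1) \<sigma>' t])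
    thus "\<exists>b' \<sigma>'. dist b' b < e \<and> geodesic a b' \<sigma>' \<and> \<sigma>' t \<in> S" using b' \<sigma>' by blast
  qed
  show ?thesis
  proof (rule gconvexI)
    fix a b \<sigma> and t :: real
    assume a: "a \<in> closure S" and b: "b \<in> closure S" and g: "geodesic a b \<sigma>" and t: "t \<in> {0..1}"
    have t': "1 - t \<in> {0..1}" using t by auto
    have "(\<lambda>s. \<sigma> (1 - s)) (1 - t) \<in> closure (closure S)"
    proof (rule hadamard_space_geodesic_point_in_closure[OF H geodesic_reverse[OF g] t'])
      fix e :: real
      assume "e > 0"
      then obtain a' where a': "a' \<in> S" "dist a' a < e" using a closure_approachable by blast
      obtain \<rho> where \<rho>: "geodesic a' b \<rho>" using hadamard_space_geodesic_exists[OF H] .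
      have "\<rho> t \<in> closure S" using one_side[OF a'(1) b \<rho> t] .
      thus "\<exists>a' \<sigma>'. dist a' a < e \<and> geodesic b a' \<sigma>' \<and> \<sigma>' (1 - t) \<in> closure S"
        using a' geodesic_reverse[OF \<rho>] by (intro exI[of _ a'] exI[of _ "\<lambda>s. \<rho> (1 - s)"]) simp
    qed
    thus "\<sigma> t \<in> closure S" by simp
  qed
qed

lemma gconvex_Times_UNIV:
  assumes H: "hadamard_space TYPE('a::metric_space)" and K: "gconvex (K::'a set)"
  shows "gconvex (K \<times> (UNIV :: real set))"
proof (rule gconvexI)
  fix p q and \<gamma> :: "real \<Rightarrow> 'a \<times> real" and t :: real
  assume p: "p \<in> K \<times> UNIV" and q: "q \<in> K \<times> UNIV" and g: "geodesic p q \<gamma>" and t: "t \<in> {0..1}"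
  obtain a \<mu> b \<nu> where ab: "p = (a, \<mu>)" "q = (b, \<nu>)" "a \<in> K" "b \<in> K"
    using p q by (cases p, cases q) auto
  obtain \<sigma> where \<sigma>: "geodesic a b \<sigma>" using hadamard_space_geodesic_exists[OF H] .
  have "\<sigma> t \<in> K" by (rule gconvexD[OF K ab(3,4) \<sigma> t])
  moreover have "fst (\<gamma> t) = \<sigma> t"
    by (rule hadamard_space_geodesic_Pair_fst[OF H _ \<sigma> t]) (use g ab(1,2) in simp)
  ultimately show "\<gamma> t \<in> K \<times> UNIV" by (simp add: mem_Times_iff)
qed

lemma hypo_infinity_indicator: "hypo (\<lambda>z. if z \<in> K then \<infinity> else -\<infinity>) = K \<times> UNIV"
  unfolding hypo_def by (auto split: if_split_asm)

lemma usc_infinity_indicator: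
  assumes "closed K"
  shows "usc (\<lambda>z. if z \<in> K then \<infinity> else -\<infinity> :: ereal)"
  unfolding usc_def
proof (intro allI impI)
  fix x and c :: ereal
  assume "(if x \<in> K then \<infinity> else -\<infinity>) < c"
  hence "x \<in> - K" "-\<infinity> < c" by (auto split: if_splits)
  moreover have "open (- K)" using assms by auto
  ultimately show "eventually (\<lambda>z. (if z \<in> K then \<infinity> else -\<infinity>) < c) (at x)"
    unfolding eventually_at_topological by (intro exI[of _ "- K"]) auto
qed

lemma closed_superlevel_usc:
  assumes "usc g"
  shows "closed {z. c \<le> g z}"
proof -
  have "open {z. g z < c}"
  proof (rule open_subopen[THEN iffD2], intro ballI)
    fix x
    assume x: "x \<in> {z. g z < c}"
    hence "eventually (\<lambda>z. g z < c) (at x)" using assms[unfolded usc_def, rule_format, of x c] by simp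
    then obtain T where T: "open T" "x \<in> T" "\<And>z. z \<in> T \<Longrightarrow> z \<noteq> x \<Longrightarrow> g z < c"
      by (auto simp: eventually_at_topological)
    show "\<exists>T. open T \<and> x \<in> T \<and> T \<subseteq> {z. g z < c}"
      using T x by (intro exI[of _ T]) auto
  qed
  hence "closed (- {z. g z < c})" by (rule closed_Compl)
  moreover have "- {z. g z < c} = {z. c \<le> g z}" by (auto simp: not_less)
  ultimately show ?thesis by simp
qed

lemma gconvex_superlevel_gconcave:
  assumes "gconcave g"
  shows "gconvex {z. ereal c \<le> g z}"
proof (rule gconvexI)
  fix z1 z2 \<sigma> and t :: real
  assume "z1 \<in> {z. ereal c \<le> g z}" "z2 \<in> {z. ereal c \<le> g z}"
    and \<sigma>: "geodesic z1 z2 \<sigma>" and t: "t \<in> {0..1}"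
  hence "(z1, c) \<in> hypo g" "(z2, c) \<in> hypo g" unfolding hypo_def by simp_all
  with assms have "(\<sigma> t, c) \<in> hypo g"
    unfolding gconcave_def using geodesic_Pair_const[OF \<sigma>] t by (rule gconvexD)
  thus "\<sigma> t \<in> {z. ereal c \<le> g z}" unfolding hypo_def by simp
qed

lemma fy_X_ge:
  assumes "i < n"
  shows "ereal (y i) \<le> fy n X y (X i)"
proof -
  have "finite {y j | j. j < n \<and> X j = X i}" by simp
  hence "y i \<le> Max {y j | j. j < n \<and> X j = X i}" by (rule Max_ge) (use assms in auto)
  thus ?thesis using assms unfolding fy_def by auto
qed

lemma fy_notin_image: "z \<notin> X ` {..<n} \<Longrightarrow> fy n X y z = -\<infinity>"
  unfolding fy_def by auto

lemma usc_concave_hull_ge_on_closure: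
  assumes x: "x \<in> closure (gconvex hull (X ` {..<n}))" and c: "\<And>i. i < n \<Longrightarrow> c \<le> y i"
  shows "ereal c \<le> usc_concave_hull n X y x"
  unfolding usc_concave_hull_def
proof (rule INF_greatest, clarify)
  fix g
  assume g: "usc g" "gconcave g" "\<forall>z. fy n X y z \<le> g z"
  let ?S = "{z. ereal c \<le> g z}"
  have "X ` {..<n} \<subseteq> ?S"
  proof
    fix z
    assume "z \<in> X ` {..<n}"
    then obtain i where i: "i < n" "z = X i" by blast
    have "ereal c \<le> ereal (y i)" using c[OF i(1)] by simp
    also have "\<dots> \<le> fy n X y (X i)" using i(1) by (rule fy_X_ge)
    also have "\<dots> \<le> g (X i)" using g(3) by blast
    finally show "z \<in> ?S" using i(2) by simp
  qed
  hence "gconvex hull (X ` {..<n}) \<subseteq> ?S"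
    by (rule hull_minimal) (rule gconvex_superlevel_gconcave[OF g(2)])
  hence "closure (gconvex hull (X ` {..<n})) \<subseteq> ?S"
    by (rule closure_minimal) (rule closed_superlevel_usc[OF g(1)])
  thus "ereal c \<le> g x" using x by blast
qed

lemma usc_concave_hull_outside_closure:
  assumes H: "hadamard_space TYPE('a::metric_space)"
    and x: "x \<notin> closure (gconvex hull (X ` {..<n}))"
  shows "usc_concave_hull n X y (x::'a) = -\<infinity>"
proof -
  define K where "K = closure (gconvex hull (X ` {..<n}))"
  define g :: "'a \<Rightarrow> ereal" where "g = (\<lambda>z. if z \<in> K then \<infinity> else -\<infinity>)"
  have "gconvex K" unfolding K_def by (rule gconvex_closure[OF H gconvex_gconvex_hull])
  hence "gconvex (K \<times> (UNIV :: real set))" by (rule gconvex_Times_UNIV[OF H])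
  hence "gconcave g" unfolding gconcave_def g_def hypo_infinity_indicator .
  moreover have "usc g" unfolding g_def K_def by (rule usc_infinity_indicator) simp
  moreover have "\<forall>z. fy n X y z \<le> g z"
  proof
    fix z
    show "fy n X y z \<le> g z"
    proof (cases "z \<in> X ` {..<n}")
      case True
      have "X ` {..<n} \<subseteq> K" unfolding K_def by (rule order_trans[OF hull_subset closure_subset])
      with True show ?thesis by (auto simp: g_def)
    qed (simp add: fy_notin_image)
  qed
  ultimately have "g \<in> {g. usc g \<and> gconcave g \<and> (\<forall>z. fy n X y z \<le> g z)}" by simp
  hence "usc_concave_hull n X y x \<le> g x" unfolding usc_concave_hull_def by (rule INF_lower)
  thus ?thesis using x by (simp add: g_def K_def)
qed

theorem lemma15:
  fixes X :: "nat \<Rightarrow> 'a::metric_space" and y :: "nat \<Rightarrow> real" and n :: nat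
  assumes "hadamard_space TYPE('a)"
  shows "{x. usc_concave_hull n X y x > -\<infinity>} = closure (gconvex hull (X ` {..<n}))"
proof (intro equalityI subsetI)
  fix x
  assume "x \<in> {x. usc_concave_hull n X y x > -\<infinity>}"
  thus "x \<in> closure (gconvex hull (X ` {..<n}))"
    using usc_concave_hull_outside_closure[OF assms] by fastforce
next
  fix x
  assume x: "x \<in> closure (gconvex hull (X ` {..<n}))"
  obtain c where "\<And>i. i < n \<Longrightarrow> c \<le> y i"
    by (rule that[of "Min (insert 0 (y ` {..<n}))"]) simp
  hence "ereal c \<le> usc_concave_hull n X y x" by (rule usc_concave_hull_ge_on_closure[OF x])
  thus "x \<in> {x. usc_concave_hull n X y x > -\<infinity>}" using less_le_trans[of "-\<infinity>" "ereal c"] by simp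
qed

end
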